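(* In the setting described in the context, for every edge $\mathfrak e\in\mathcal E$ and all $\bar{\vec p},\bar{\vec q},\bar{\vec v},\bar{\vec w}\in(\mathds P_p(\mathfrak e))^3$, \begin{align*} (\epsilon^{\vec u}_{\mathfrak e},\partial_x\bar{\vec p})_{\mathfrak e}&=(C_{\vec n}^{-1}(\vec n-\bar{\vec n}_{\mathfrak e}),\bar{\vec p})_{\mathfrak e}+(\vec i_{\mathfrak e}\times(\vec r-\bar{\vec r}_{\mathfrak e}),\bar{\vec p})_{\mathfrak e}+\langle\vec u-\bar{\vec u}_{\mathfrak n},\bar{\vec p}\,\nu_{\mathfrak e}\rangle_{\mathfrak e},\\ (\epsilon^{\vec r}_{\mathfrak e},\partial_x\bar{\vec q})_{\mathfrak e}&=(C_{\vec m}^{-1}(\vec m-\bar{\vec m}_{\mathfrak e}),\bar{\vec q})_{\mathfrak e}+\langle\vec r-\bar{\vec r}_{\mathfrak n},\bar{\vec q}\,\nu_{\mathfrak e}\rangle_{\mathfrak e},\\ (\partial_x\epsilon^{\vec n}_{\mathfrak e},\bar{\vec v})_{\mathfrak e}&=\langle\tau_{\mathfrak e}(\bar{\vec u}_{\mathfrak e}-\bar{\vec u}_{\mathfrak n})-\theta^{\vec n}_{\mathfrak e}\nu_{\mathfrak e},\bar{\vec v}\rangle_{\mathfrak e},\\ (\partial_x\epsilon^{\vec m}_{\mathfrak e},\bar{\vec w})_{\mathfrak e}&=\langle\tau_{\mathfrak e}(\bar{\vec r}_{\mathfrak e}-\bar{\vec r}_{\mathfrak n})-\theta^{\vec m}_{\mathfrak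 e}\nu_{\mathfrak e},\bar{\vec w}\rangle_{\mathfrak e}-(\vec i_{\mathfrak e}\times(\vec n-\bar{\vec n}_{\mathfrak e}),\bar{\vec w})_{\mathfrak e}. \end{align*} Furthermore, for every node $\mathfrak n\in\mathcal N\setminus\mathcal N_{\mathrm D}$ and all $\vec v_{\mathfrak n},\vec w_{\mathfrak n}\in\mathbb R^3$, \[ 0=[\![\epsilon^{\vec n}_{\mathfrak e}\nu_{\mathfrak e}+\tau_{\mathfrak e}\epsilon^{\vec u}_{\mathfrak e}-\tau_{\mathfrak e}(\vec u-\bar{\vec u}_{\mathfrak n})]\!]_{\mathfrak n}\cdot\vec v_{\mathfrak n}+[\![\epsilon^{\vec m}_{\mathfrak e}\nu_{\mathfrak e}+\tau_{\mathfrak e}\epsilon^{\vec r}_{\mathfrak e}-\tau_{\mathfrak e}(\vec r-\bar{\vec r}_{\mathfrak n})]\!]_{\mathfrak n}\cdot\vec w_{\mathfrak n}. \]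
   Context: Network: $\mathcal G=(\mathcal N,\mathcal E)$ finite connected graph embedded in $\mathbb R^3$; each edge $\mathfrak e$ is the straight segment between distinct nodes $\mathfrak n_k,\mathfrak n_\ell$ ($k<\ell$), with length $h_{\mathfrak e}$, direction $\vec i_{\mathfrak e}=(\mathfrak n_\ell-\mathfrak n_k)/h_{\mathfrak e}$, normals $\nu_{\mathfrak e}(\mathfrak n_k)=-1$, $\nu_{\mathfrak e}(\mathfrak n_\ell)=+1$; $x$ arclength on $\mathfrak e$ increasing along $\vec i_{\mathfrak e}$, $\partial_x$ its derivative, $\times$ cross product. $C_{\vec n},C_{\vec m}$ symmetric $\mathbb R^{3\times3}$-valued functions on edges with uniform bounds $\alpha|\xi|^2\le(C\xi)\cdot\xi\le\beta|\xi|^2$, $0<\alpha,\beta<\infty$. $(\vec a,\vec b)_{\mathfrak e}=\int_{\mathfrak e}\vec a\cdot\vec b\,\mathrm d\sigma$, $\langle\vec a,\vec b\rangle_{\mathfrak e}=\sum_{\mathfrak n\text{ endpoint of }\mathfrak e}\vec a(\mathfrak n)\cdot\vec b(\mathfrak n)$ (also for nodal quantities). For edge quantities, $[\![q_{\mathfrak e}]\!]_{\mathfrak n}=\sum_{\mathfrak e\text{ adjacent to }\mathfrak n}q_{\mathfrak e}(\mathfrak n)$. A nonempty set $\mathcal N_{\mathrm D}\subset\mathcal N$ of Dirichlet nodes is fixed. Data: $\vec f_{\mathfrak e},\vec g_{\mathfrak e}\in(L^2(\mathfrak e))^3$ per edge, $\vec f_{\mathfrak n},\vec g_{\mathfrak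 n}\in\mathbb R^3$ per free node, $\vec u^{\mathrm D}_{\mathfrak n},\vec r^{\mathrm D}_{\mathfrak n}\in\mathbb R^3$ per Dirichlet node. Exact solution: $\vec u_{\mathfrak e},\vec r_{\mathfrak e}\in(L^2(\mathfrak e))^3$, $\vec n_{\mathfrak e},\vec m_{\mathfrak e}\in(H^1(\mathfrak e))^3$ per edge and $\vec u_{\mathfrak n},\vec r_{\mathfrak n}\in\mathbb R^3$ per node (unique) with $\vec u_{\mathfrak n}=\vec u^{\mathrm D}_{\mathfrak n}$, $\vec r_{\mathfrak n}=\vec r^{\mathrm D}_{\mathfrak n}$ on $\mathcal N_{\mathrm D}$, $[\![\vec n_{\mathfrak e}\nu_{\mathfrak e}]\!]_{\mathfrak n}=\vec f_{\mathfrak n}$, $[\![\vec m_{\mathfrak e}\nu_{\mathfrak e}]\!]_{\mathfrak n}=\vec g_{\mathfrak n}$ on $\mathcal N\setminus\mathcal N_{\mathrm D}$, and on each edge, for all $\vec p,\vec q\in(H^1(\mathfrak e))^3$, $\vec v,\vec w\in(L^2(\mathfrak e))^3$: $-(C_{\vec n}^{-1}\vec n_{\mathfrak e},\vec p)_{\mathfrak e}+(\vec u_{\mathfrak e},\partial_x\vec p)_{\mathfrak e}-(\vec i_{\mathfrak e}\times\vec r_{\mathfrak e},\vec p)_{\mathfrak e}=\langle\vec u_{\mathfrak n},\vec p\nu_{\mathfrak e}\rangle_{\mathfrak e}$; $-(C_{\vec m}^{-1}\vec m_{\mathfrak e},\vec q)_{\mathfrak e}+(\vec r_{\mathfrak e},\partial_x\vec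 q)_{\mathfrak e}=\langle\vec r_{\mathfrak n},\vec q\nu_{\mathfrak e}\rangle_{\mathfrak e}$; $(\partial_x\vec n_{\mathfrak e},\vec v)_{\mathfrak e}=(\vec f_{\mathfrak e},\vec v)_{\mathfrak e}$; $(\vec i_{\mathfrak e}\times\vec n_{\mathfrak e},\vec w)_{\mathfrak e}+(\partial_x\vec m_{\mathfrak e},\vec w)_{\mathfrak e}=(\vec g_{\mathfrak e},\vec w)_{\mathfrak e}$. Then $\vec u_{\mathfrak e},\vec r_{\mathfrak e}\in(H^1(\mathfrak e))^3$ with $\vec u_{\mathfrak e}(\mathfrak n)=\vec u_{\mathfrak n}$, $\vec r_{\mathfrak e}(\mathfrak n)=\vec r_{\mathfrak n}$; subscripts are dropped, writing $\vec u,\vec r,\vec n,\vec m$. HDG solution: fix $p\in\mathbb N$, $\tau_{\mathfrak e}>0$ per edge, $V_p^{\mathfrak e}=(\mathds P_p(\mathfrak e))^3$. $\bar{\vec u}_{\mathfrak e},\bar{\vec r}_{\mathfrak e},\bar{\vec n}_{\mathfrak e},\bar{\vec m}_{\mathfrak e}\in V_p^{\mathfrak e}$ per edge and $\bar{\vec u}_{\mathfrak n},\bar{\vec r}_{\mathfrak n}\in\mathbb R^3$ per node with $\bar{\vec u}_{\mathfrak n}=\vec u^{\mathrm D}_{\mathfrak n}$, $\bar{\vec r}_{\mathfrak n}=\vec r^{\mathrm D}_{\mathfrak n}$ on $\mathcal N_{\mathrm D}$; $[\![\bar{\vec n}_{\mathfrak e}\nu_{\mathfrak e}+\tau_{\mathfrak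 e}(\bar{\vec u}_{\mathfrak e}-\bar{\vec u}_{\mathfrak n})]\!]_{\mathfrak n}=\vec f_{\mathfrak n}$ and $[\![\bar{\vec m}_{\mathfrak e}\nu_{\mathfrak e}+\tau_{\mathfrak e}(\bar{\vec r}_{\mathfrak e}-\bar{\vec r}_{\mathfrak n})]\!]_{\mathfrak n}=\vec g_{\mathfrak n}$ on $\mathcal N\setminus\mathcal N_{\mathrm D}$; and on each edge, for all $\bar{\vec p},\bar{\vec q},\bar{\vec v},\bar{\vec w}\in V_p^{\mathfrak e}$: $-(C_{\vec n}^{-1}\bar{\vec n}_{\mathfrak e},\bar{\vec p})_{\mathfrak e}+(\bar{\vec u}_{\mathfrak e},\partial_x\bar{\vec p})_{\mathfrak e}-(\vec i_{\mathfrak e}\times\bar{\vec r}_{\mathfrak e},\bar{\vec p})_{\mathfrak e}=\langle\bar{\vec u}_{\mathfrak n},\bar{\vec p}\nu_{\mathfrak e}\rangle_{\mathfrak e}$; $-(C_{\vec m}^{-1}\bar{\vec m}_{\mathfrak e},\bar{\vec q})_{\mathfrak e}+(\bar{\vec r}_{\mathfrak e},\partial_x\bar{\vec q})_{\mathfrak e}=\langle\bar{\vec r}_{\mathfrak n},\bar{\vec q}\nu_{\mathfrak e}\rangle_{\mathfrak e}$; $(\partial_x\bar{\vec n}_{\mathfrak e},\bar{\vec v})_{\mathfrak e}+\tau_{\mathfrak e}\langle\bar{\vec u}_{\mathfrak e},\bar{\vec v}\rangle_{\mathfrak e}=(\vec f_{\mathfrak e},\bar{\vec v})_{\mathfrak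 e}+\tau_{\mathfrak e}\langle\bar{\vec u}_{\mathfrak n},\bar{\vec v}\rangle_{\mathfrak e}$; $(\vec i_{\mathfrak e}\times\bar{\vec n}_{\mathfrak e},\bar{\vec w})_{\mathfrak e}+(\partial_x\bar{\vec m}_{\mathfrak e},\bar{\vec w})_{\mathfrak e}+\tau_{\mathfrak e}\langle\bar{\vec r}_{\mathfrak e},\bar{\vec w}\rangle_{\mathfrak e}=(\vec g_{\mathfrak e},\bar{\vec w})_{\mathfrak e}+\tau_{\mathfrak e}\langle\bar{\vec r}_{\mathfrak n},\bar{\vec w}\rangle_{\mathfrak e}$. Projection: for $\vec a,\vec b\in(H^1(\mathfrak e))^3$, $\Pi(\vec a,\vec b)=(\Pi_1(\vec a,\vec b),\Pi_2(\vec a,\vec b))\in V_p^{\mathfrak e}\times V_p^{\mathfrak e}$ is the (well-defined) pair with $(\Pi_1(\vec a,\vec b),\bar{\vec v})_{\mathfrak e}=(\vec a,\bar{\vec v})_{\mathfrak e}$ and $(\Pi_2(\vec a,\vec b),\bar{\vec v})_{\mathfrak e}=(\vec b,\bar{\vec v})_{\mathfrak e}$ for all $\bar{\vec v}\in(\mathds P_{p-1}(\mathfrak e))^3$, and $\Pi_2(\vec a,\vec b)(\mathfrak n)\nu_{\mathfrak e}(\mathfrak n)+\tau_{\mathfrak e}\Pi_1(\vec a,\vec b)(\mathfrak n)=\vec b(\mathfrak n)\nu_{\mathfrak e}(\mathfrak n)+\tau_{\mathfrak e}\vec a(\mathfrak n)$ at both endpoints $\mathfrak n$. Errors: $\theta^{\vec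 u}_{\mathfrak e}=\vec u_{\mathfrak e}-\Pi_1(\vec u_{\mathfrak e},\vec n_{\mathfrak e})$, $\epsilon^{\vec u}_{\mathfrak e}=\Pi_1(\vec u_{\mathfrak e},\vec n_{\mathfrak e})-\bar{\vec u}_{\mathfrak e}$, $\theta^{\vec n}_{\mathfrak e}=\vec n_{\mathfrak e}-\Pi_2(\vec u_{\mathfrak e},\vec n_{\mathfrak e})$, $\epsilon^{\vec n}_{\mathfrak e}=\Pi_2(\vec u_{\mathfrak e},\vec n_{\mathfrak e})-\bar{\vec n}_{\mathfrak e}$, and analogously $\theta^{\vec r}_{\mathfrak e}=\vec r_{\mathfrak e}-\Pi_1(\vec r_{\mathfrak e},\vec m_{\mathfrak e})$, $\epsilon^{\vec r}_{\mathfrak e}=\Pi_1(\vec r_{\mathfrak e},\vec m_{\mathfrak e})-\bar{\vec r}_{\mathfrak e}$, $\theta^{\vec m}_{\mathfrak e}=\vec m_{\mathfrak e}-\Pi_2(\vec r_{\mathfrak e},\vec m_{\mathfrak e})$, $\epsilon^{\vec m}_{\mathfrak e}=\Pi_2(\vec r_{\mathfrak e},\vec m_{\mathfrak e})-\bar{\vec m}_{\mathfrak e}$. *)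

theory Defs
  imports "HOL-Analysis.Analysis" "HOL-Computational_Algebra.Polynomial"
begin

type_synonym vec3 = "real^3"
type_synonym mat3 = "real^3^3"

text \<open>Each edge is parametrised by arclength x in [0, h], h its length; x = 0 is the
  tail node (normal -1), x = h is the head node (normal +1).\<close>

definition edge_len :: "('v \<Rightarrow> vec3) \<Rightarrow> ('e \<Rightarrow> 'v) \<Rightarrow> ('e \<Rightarrow> 'v) \<Rightarrow> 'e \<Rightarrow> real" where
  "edge_len pos src trg e = dist (pos (src e)) (pos (trg e))"

definition edge_dir :: "('v \<Rightarrow> vec3) \<Rightarrow> ('e \<Rightarrow> 'v) \<Rightarrow> ('e \<Rightarrow> 'v) \<Rightarrow> 'e \<Rightarrow> vec3" where
  "edge_dir pos src trg e = inverse (edge_len pos src trg e) *\<^sub>R (pos (trg e) - pos (src e))"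

definition ip :: "real \<Rightarrow> (real \<Rightarrow> vec3) \<Rightarrow> (real \<Rightarrow> vec3) \<Rightarrow> real" where
  "ip h a b = integral {0..h} (\<lambda>x. a x \<bullet> b x)"

definition L2 :: "real \<Rightarrow> (real \<Rightarrow> vec3) \<Rightarrow> bool" where
  "L2 h f \<longleftrightarrow> f measurable_on {0..h} \<and> (\<lambda>x. norm (f x) ^ 2) integrable_on {0..h}"

text \<open>g is the (weak) derivative of f in H1(0,h): f is the absolutely continuous
  representative, f(x) = f(0) + int_0^x g, with g in L2.\<close>
definition wderiv :: "real \<Rightarrow> (real \<Rightarrow> vec3) \<Rightarrow> (real \<Rightarrow> vec3) \<Rightarrow> bool" where
  "wderiv h f g \<longleftrightarrow> L2 h g \<and> (\<forall>x\<in>{0..h}. f x = f 0 + integral {0..x} g)"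

definition H1 :: "real \<Rightarrow> (real \<Rightarrow> vec3) \<Rightarrow> bool" where
  "H1 h f \<longleftrightarrow> (\<exists>g. wderiv h f g)"

definition polyvec :: "nat \<Rightarrow> (real \<Rightarrow> vec3) \<Rightarrow> bool" where
  "polyvec k f \<longleftrightarrow> (\<forall>i. \<exists>q :: real poly. degree q \<le> k \<and> (\<forall>x. f x $ i = poly q x))"

text \<open>(P_{p-1})^3, with the convention P_{-1} = {0}.\<close>
definition polyvec_m1 :: "nat \<Rightarrow> (real \<Rightarrow> vec3) \<Rightarrow> bool" where
  "polyvec_m1 p f \<longleftrightarrow> (if p = 0 then (\<forall>x. f x = 0) else polyvec (p - 1) f)"

definition dx :: "(real \<Rightarrow> vec3) \<Rightarrow> real \<Rightarrow> vec3" where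
  "dx f = (\<lambda>x. vector_derivative f (at x))"

text \<open>Edge boundary pairing <.,.>_e: q node x nu, summed over the two endpoints.\<close>
definition bdry :: "('e \<Rightarrow> 'v) \<Rightarrow> ('e \<Rightarrow> 'v) \<Rightarrow> real \<Rightarrow> ('v \<Rightarrow> real \<Rightarrow> real \<Rightarrow> real) \<Rightarrow> 'e \<Rightarrow> real" where
  "bdry src trg h q e = q (src e) 0 (-1) + q (trg e) h 1"

text \<open>Jump [[q_e]]_n = sum over edges adjacent to node n of q_e(n); q e x nu.\<close>
definition jump :: "'e set \<Rightarrow> ('e \<Rightarrow> 'v) \<Rightarrow> ('e \<Rightarrow> 'v) \<Rightarrow> ('e \<Rightarrow> real)
    \<Rightarrow> ('e \<Rightarrow> real \<Rightarrow> real \<Rightarrow> vec3) \<Rightarrow> 'v \<Rightarrow> vec3" where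
  "jump E src trg h q n = (\<Sum>e\<in>{e\<in>E. src e = n}. q e 0 (-1)) + (\<Sum>e\<in>{e\<in>E. trg e = n}. q e (h e) 1)"

definition is_proj :: "nat \<Rightarrow> real \<Rightarrow> real \<Rightarrow> (real \<Rightarrow> vec3) \<Rightarrow> (real \<Rightarrow> vec3)
    \<Rightarrow> (real \<Rightarrow> vec3) \<Rightarrow> (real \<Rightarrow> vec3) \<Rightarrow> bool" where
  "is_proj p tau h a b P1 P2 \<longleftrightarrow> polyvec p P1 \<and> polyvec p P2 \<and>
     (\<forall>v. polyvec_m1 p v \<longrightarrow> ip h P1 v = ip h a v \<and> ip h P2 v = ip h b v) \<and>
     (- P2 0) + tau *\<^sub>R P1 0 = (- b 0) + tau *\<^sub>R a 0 \<and>
     P2 h + tau *\<^sub>R P1 h = b h + tau *\<^sub>R a h"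

end

(* Proof idea: on each edge subtract the HDG equations from the exact ones, tested with the same
   polynomial.  The projection Pi is L2-orthogonal to P_{p-1}, which contains the derivatives of
   all test functions, so the projection error drops out of the volume terms.  In the equations
   for n and m one first integrates by parts (n, m are only H1, which is handled by Fubini on the
   triangle 0 <= t <= x <= h); the boundary condition of Pi then produces the terms theta nu.
   At a free node the same boundary condition turns the jump of the error flux into the jump of
   the exact flux minus the jump of the numerical flux, and both equal the nodal load. *)
theory Submission
  imports Defs
begin

section \<open>Integration by parts against an indefinite integral\<close>

lemma integrable_lower_triangle:
  fixes b c :: "real \<Rightarrow> real"
  assumes b_meas [measurable]: "b \<in> borel_measurable borel"
    and c_meas [measurable]: "c \<in> borel_measurable borel"
    and b_int: "set_integrable lborel {0..h} b"
    and c_bound: "\<And>x. \<bar>c x\<bar> \<le> C" and c_supp: "\<And>x. x \<notin> {0..h} \<Longrightarrow> c x = 0"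
  shows "integrable (lborel \<Otimes>\<^sub>M lborel) (\<lambda>(x, t). c x * (indicator {0..x} t * b t))"
proof -
  have F_meas: "(\<lambda>(x, t). c x * (indicator {0..x} t * b t)) \<in> borel_measurable (lborel \<Otimes>\<^sub>M lborel)"
  proof -
    have "(\<lambda>(x, t). c x * (indicator {0..x} t * b t)) = (\<lambda>(x, t). c x * (if 0 \<le> t \<and> t \<le> x then b t else 0))"
      by (auto simp: indicator_def fun_eq_iff)
    then show ?thesis by simp
  qed
  have b_int_sub: "integrable lborel (\<lambda>t. indicator {0..x} t * b t)" if "x \<le> h" for x
    using set_integrable_subset[OF b_int, of "{0..x}"] that by (simp add: set_integrable_def)
  have slice_int: "integrable lborel (\<lambda>t. c x * (indicator {0..x} t * b t))" for x
    by (cases "x \<le> h") (auto simp: c_supp intro: b_int_sub)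
  define K where "K = (LBINT t. indicator {0..h} t * \<bar>b t\<bar>)"
  have slice_bound: "(LBINT t. norm (c x * (indicator {0..x} t * b t))) \<le> C * K" if x: "x \<in> {0..h}" for x
  proof -
    have "(LBINT t. norm (c x * (indicator {0..x} t * b t))) = \<bar>c x\<bar> * (LBINT t. indicator {0..x} t * \<bar>b t\<bar>)"
      by (simp add: abs_mult)
    also have "\<dots> \<le> C * K"
    proof (rule mult_mono)
      show "(LBINT t. indicator {0..x} t * \<bar>b t\<bar>) \<le> K"
        unfolding K_def using x integrable_abs[OF b_int_sub[of x]] integrable_abs[OF b_int_sub[of h]]
        by (intro integral_mono) (auto simp: indicator_def abs_mult)
    qed (use c_bound[of x] c_bound[of 0] in \<open>auto intro: integral_nonneg_AE\<close>)
    finally show ?thesis .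
  qed
  have "integrable lborel (\<lambda>x. LBINT t. norm (c x * (indicator {0..x} t * b t)))"
  proof (rule integrableI_bounded_set[where A="{0..h}" and B="C * K"])
    show "(\<lambda>x. LBINT t. norm (c x * (indicator {0..x} t * b t))) \<in> borel_measurable lborel"
      using F_meas by measurable
    show "AE x\<in>{0..h} in lborel. norm (LBINT t. norm (c x * (indicator {0..x} t * b t))) \<le> C * K"
      using slice_bound by (intro AE_I2) (simp add: integral_nonneg_AE)
  qed (auto simp: c_supp emeasure_lborel_Icc_eq)
  with slice_int show ?thesis
    by (intro lborel_pair.Fubini_integrable[OF F_meas]) simp_all
qed

lemma lborel_integral_indicator_eq_integral:
  fixes f :: "real \<Rightarrow> real"
  assumes "set_integrable lborel S f"
  shows "(LBINT x. indicator S x * f x) = integral S f"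
  using set_borel_integral_eq_integral(2)[OF assms] by (simp add: set_lebesgue_integral_def)

lemma continuous_on_set_integrable_Icc:
  fixes f :: "real \<Rightarrow> real"
  assumes "continuous_on {a..b} f"
  shows "set_integrable lborel {a..b} f"
  unfolding set_integrable_def using assms by (intro borel_integrable_compact) auto

lemma integral_indefinite_integral_swap_borel:
  fixes b c :: "real \<Rightarrow> real"
  assumes b_meas: "b \<in> borel_measurable borel" and b_int: "set_integrable lborel {0..h} b"
    and c: "continuous_on {0..h} c"
  shows "integral {0..h} (\<lambda>x. c x * integral {0..x} b) = integral {0..h} (\<lambda>t. b t * integral {t..h} c)"
proof -
  define c' where "c' x = indicator {0..h} x * c x" for x
  obtain C where C: "0 < C" "\<forall>y\<in>c ` {0..h}. norm y \<le> C"
    using compact_imp_bounded[OF compact_continuous_image[OF c compact_Icc]] bounded_pos by blast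
  define F where "F x t = c' x * (indicator {0..x} t * b t)" for x t
  have F_int: "integrable (lborel \<Otimes>\<^sub>M lborel) (\<lambda>(x, t). F x t)"
    unfolding F_def
  proof (rule integrable_lower_triangle[OF b_meas _ b_int])
    show "c' \<in> borel_measurable borel"
      unfolding c'_def using borel_measurable_continuous_on_indicator[OF _ c] by simp
    show "\<bar>c' x\<bar> \<le> C" for x
      using C by (cases "x \<in> {0..h}") (auto simp: c'_def)
  qed (simp add: c'_def)
  have inner_x: "(LBINT t. F x t) = indicator {0..h} x * (c x * integral {0..x} b)" for x
  proof (cases "x \<in> {0..h}")
    case True
    then have "(LBINT t. indicator {0..x} t * b t) = integral {0..x} b"
      by (intro lborel_integral_indicator_eq_integral set_integrable_subset[OF b_int]) auto
    then show ?thesis by (simp add: F_def c'_def)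
  qed (simp add: F_def c'_def)
  have inner_t: "(LBINT x. F x t) = indicator {0..h} t * (b t * integral {t..h} c)" for t
  proof -
    have "(\<lambda>x. F x t) = (\<lambda>x. indicator {0..h} t * b t * (indicator {t..h} x * c x))"
      by (auto simp: F_def c'_def indicator_def)
    moreover have "(LBINT x. indicator {t..h} x * c x) = integral {t..h} c" if "t \<in> {0..h}"
      using that by (intro lborel_integral_indicator_eq_integral continuous_on_set_integrable_Icc
          continuous_on_subset[OF c]) auto
    ultimately show ?thesis by (auto simp: indicator_def)
  qed
  have "integral {0..h} (\<lambda>x. c x * integral {0..x} b) = (LBINT x. LBINT t. F x t)"
    unfolding inner_x using set_borel_integral_eq_integral(1)[OF b_int]
    by (intro lborel_integral_indicator_eq_integral[symmetric] continuous_on_set_integrable_Icc)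
       (auto intro!: continuous_intros c indefinite_integral_continuous_1)
  also have "\<dots> = (LBINT t. LBINT x. F x t)"
    using lborel_pair.Fubini_integral[OF F_int] by simp
  also have "\<dots> = integral {0..h} (\<lambda>t. b t * integral {t..h} c)"
    unfolding inner_t using lborel_pair.integrable_snd[OF F_int]
    by (intro lborel_integral_indicator_eq_integral) (simp add: inner_t set_integrable_def)
  finally show ?thesis .
qed

text \<open>Fubini's theorem is available for lborel only, whereas L2 data are merely
  Lebesgue measurable.\<close>

lemma absolutely_integrable_on_borel_representative:
  fixes g :: "real \<Rightarrow> real"
  assumes "g absolutely_integrable_on {a..b}"
  obtains g' N where "g' \<in> borel_measurable borel" "set_integrable lborel {a..b} g'"
    "negligible N" "\<And>t. t \<in> {a..b} - N \<Longrightarrow> g t = g' t"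
proof -
  have "(\<lambda>t. indicator {a..b} t *\<^sub>R g t) \<in> borel_measurable (completion lborel)"
    using assms by (intro borel_measurable_integrable) (simp add: set_integrable_def)
  then obtain g0 where g0_meas: "g0 \<in> borel_measurable lborel"
    and g0_ae: "AE t in lborel. indicator {a..b} t *\<^sub>R g t = g0 t"
    using completion_ex_borel_measurable_real by blast
  obtain N where N: "{t \<in> space lborel. indicator {a..b} t *\<^sub>R g t \<noteq> g0 t} \<subseteq> N"
    and N_null: "N \<in> null_sets lborel"
    using AE_E[OF g0_ae] by (metis null_setsI)
  define g' where "g' t = indicator {a..b} t * g0 t" for t
  have g'_meas: "g' \<in> borel_measurable borel"
    using g0_meas unfolding g'_def by measurable
  have eq: "g t = g' t" if "t \<in> {a..b} - N" for t
    using that N by (force simp: g'_def)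
  have N_negl: "negligible N"
    using N_null by (simp add: negligible_iff_null_sets null_sets_completionI)
  have "g' absolutely_integrable_on {a..b}"
    by (rule absolutely_integrable_spike[OF assms N_negl]) (use eq in auto)
  then have "set_integrable lborel {a..b} g'"
    using g'_meas by (simp add: set_integrable_def integrable_completion)
  with g'_meas N_negl eq show ?thesis by (intro that)
qed

lemma integral_indefinite_integral_swap:
  fixes g c :: "real \<Rightarrow> real"
  assumes g: "g absolutely_integrable_on {0..h}" and c: "continuous_on {0..h} c"
  shows "integral {0..h} (\<lambda>x. c x * integral {0..x} g) = integral {0..h} (\<lambda>t. g t * integral {t..h} c)"
proof -
  obtain b N where b: "b \<in> borel_measurable borel" "set_integrable lborel {0..h} b"
    and N: "negligible N" and eq: "\<And>t. t \<in> {0..h} - N \<Longrightarrow> g t = b t"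
    using absolutely_integrable_on_borel_representative[OF g] by blast
  have "integral {0..h} (\<lambda>x. c x * integral {0..x} g) = integral {0..h} (\<lambda>x. c x * integral {0..x} b)"
  proof (rule integral_cong)
    fix x assume "x \<in> {0..h}"
    then have "integral {0..x} g = integral {0..x} b"
      by (intro integral_spike[OF N]) (use eq in auto)
    then show "c x * integral {0..x} g = c x * integral {0..x} b" by simp
  qed
  also have "\<dots> = integral {0..h} (\<lambda>t. b t * integral {t..h} c)"
    by (rule integral_indefinite_integral_swap_borel[OF b c])
  also have "\<dots> = integral {0..h} (\<lambda>t. g t * integral {t..h} c)"
    by (intro integral_spike[OF N]) (use eq in auto)
  finally show ?thesis .
qed

lemma absolutely_integrable_mult_continuous:
  fixes g w :: "real \<Rightarrow> real"
  assumes g: "g absolutely_integrable_on {a..b}" and w: "continuous_on {a..b} w"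
  shows "(\<lambda>t. g t * w t) integrable_on {a..b}"
proof -
  have "(\<lambda>t. w t * g t) absolutely_integrable_on {a..b}"
  proof (rule absolutely_integrable_bounded_measurable_product_real[OF _ _ _ g])
    show "{a..b} \<in> sets lebesgue"
      by (simp add: fmeasurableD)
    then show "w \<in> borel_measurable (lebesgue_on {a..b})"
      by (rule continuous_imp_measurable_on_sets_lebesgue[OF w])
    show "bounded (w ` {a..b})"
      by (rule compact_imp_bounded[OF compact_continuous_image[OF w compact_Icc]])
  qed
  then show ?thesis
    using set_lebesgue_integral_eq_integral(1) by (simp add: mult.commute)
qed

lemma integration_by_parts_indefinite_integral:
  fixes g F w w' :: "real \<Rightarrow> real"
  assumes h: "0 \<le> h" and g: "g absolutely_integrable_on {0..h}"
    and F: "\<And>x. x \<in> {0..h} \<Longrightarrow> F x = F 0 + integral {0..x} g"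
    and w: "\<And>x. x \<in> {0..h} \<Longrightarrow> (w has_real_derivative w' x) (at x within {0..h})"
    and w': "continuous_on {0..h} w'"
  shows "((\<lambda>x. g x * w x) has_integral F h * w h - F 0 * w 0 - integral {0..h} (\<lambda>x. F x * w' x)) {0..h}"
proof -
  have g_int: "g integrable_on {0..h}"
    using g set_lebesgue_integral_eq_integral(1) by blast
  have w_cont: "continuous_on {0..h} w"
    by (simp add: continuous_on_eq_continuous_within DERIV_continuous[OF w])
  have FTC: "integral {t..h} w' = w h - w t" if "t \<in> {0..h}" for t
  proof (rule integral_unique, rule fundamental_theorem_of_calculus)
    show "t \<le> h" using that by simp
    show "(w has_vector_derivative w' x) (at x within {t..h})" if "x \<in> {t..h}" for x
    proof (rule has_vector_derivative_within_subset)
      show "(w has_vector_derivative w' x) (at x within {0..h})"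
        using w[of x] \<open>t \<in> {0..h}\<close> that by (simp add: has_real_derivative_iff_has_vector_derivative)
    qed (use \<open>t \<in> {0..h}\<close> in auto)
  qed
  have gw_int: "(\<lambda>t. g t * w t) integrable_on {0..h}"
    by (rule absolutely_integrable_mult_continuous[OF g w_cont])
  have G_cont: "continuous_on {0..h} (\<lambda>x. integral {0..x} g)"
    by (rule indefinite_integral_continuous_1[OF g_int])
  have "integral {0..h} (\<lambda>x. F x * w' x) = integral {0..h} (\<lambda>x. F 0 * w' x + w' x * integral {0..x} g)"
  proof (rule integral_cong)
    fix x assume "x \<in> {0..h}"
    from F[OF this] show "F x * w' x = F 0 * w' x + w' x * integral {0..x} g"
      by (simp add: algebra_simps)
  qed
  also have "\<dots> = F 0 * integral {0..h} w' + integral {0..h} (\<lambda>x. w' x * integral {0..x} g)"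
    by (subst integral_add) (auto intro!: integrable_continuous_interval continuous_intros G_cont w')
  also have "integral {0..h} (\<lambda>x. w' x * integral {0..x} g) = integral {0..h} (\<lambda>t. g t * (w h - w t))"
    unfolding integral_indefinite_integral_swap[OF g w'] by (rule integral_cong) (simp add: FTC)
  also have "\<dots> = integral {0..h} g * w h - integral {0..h} (\<lambda>t. g t * w t)"
    using g_int gw_int by (simp add: right_diff_distrib integral_diff integrable_on_mult_left)
  finally have "integral {0..h} (\<lambda>t. g t * w t) = F h * w h - F 0 * w 0 - integral {0..h} (\<lambda>x. F x * w' x)"
    using F[of h] FTC[of 0] h by (simp add: algebra_simps)
  with gw_int show ?thesis
    by (metis has_integral_integrable_integral)
qed

section \<open>Weak derivatives on an edge\<close>

lemma L2_absolutely_integrable: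
  assumes "L2 h f"
  shows "f absolutely_integrable_on {0..h}"
proof (rule measurable_bounded_by_integrable_imp_absolutely_integrable)
  show "f \<in> borel_measurable (lebesgue_on {0..h})"
    using assms by (simp add: L2_def measurable_on_iff_borel_measurable)
  show "(\<lambda>x. 1 + norm (f x) ^ 2) integrable_on {0..h}"
    using assms by (intro integrable_add) (auto simp: L2_def)
  show "norm (f x) \<le> 1 + norm (f x) ^ 2" for x
  proof -
    have "0 \<le> (norm (f x) - 1/2) ^ 2" by simp
    then show ?thesis by (simp add: power2_eq_square algebra_simps)
  qed
qed auto

lemma continuous_on_imp_L2:
  assumes "continuous_on {0..h} f"
  shows "L2 h f"
  unfolding L2_def
proof
  show "f measurable_on {0..h}"
    using assms by (simp add: measurable_on_iff_borel_measurable continuous_imp_measurable_on_sets_lebesgue)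
  show "(\<lambda>x. (norm (f x))\<^sup>2) integrable_on {0..h}"
    by (intro integrable_continuous_interval continuous_intros assms)
qed

lemma wderiv_integrable:
  assumes "wderiv h f g"
  shows "g integrable_on {0..h}"
  using assms L2_absolutely_integrable set_lebesgue_integral_eq_integral(1)
  unfolding wderiv_def by blast

lemma wderiv_continuous_on:
  assumes "wderiv h f g"
  shows "continuous_on {0..h} f"
proof -
  have "continuous_on {0..h} (\<lambda>x. f 0 + integral {0..x} g)"
    by (intro continuous_intros indefinite_integral_continuous_1 wderiv_integrable[OF assms])
  then show ?thesis
    using assms unfolding wderiv_def by (metis (no_types, lifting) continuous_on_cong)
qed

lemma H1_continuous_on: "H1 h f \<Longrightarrow> continuous_on {0..h} f"
  unfolding H1_def using wderiv_continuous_on by blast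

lemma wderiv_integration_by_parts:
  assumes h: "0 \<le> h" and fg: "wderiv h f g"
    and w: "\<And>x. x \<in> {0..h} \<Longrightarrow> (w has_vector_derivative w' x) (at x within {0..h})"
    and w': "continuous_on {0..h} w'"
  shows "ip h g w = f h \<bullet> w h - f 0 \<bullet> w 0 - ip h f w'"
proof -
  have g_abs: "(\<lambda>x. g x $ i) absolutely_integrable_on {0..h}" for i
    using absolutely_integrable_component[OF L2_absolutely_integrable, of h g "axis i 1"] fg
    by (simp add: wderiv_def inner_axis)
  have component: "((\<lambda>x. g x $ i * w x $ i) has_integral
      f h $ i * w h $ i - f 0 $ i * w 0 $ i - integral {0..h} (\<lambda>x. f x $ i * w' x $ i)) {0..h}" for i
  proof (rule integration_by_parts_indefinite_integral[OF h g_abs])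
    show "f x $ i = f 0 $ i + integral {0..x} (\<lambda>x. g x $ i)" if "x \<in> {0..h}" for x
    proof -
      have "g integrable_on {0..x}"
        by (rule integrable_on_subinterval[OF wderiv_integrable[OF fg]]) (use that in auto)
      moreover have "f x = f 0 + integral {0..x} g"
        using fg that unfolding wderiv_def by blast
      ultimately show ?thesis by simp
    qed
    show "((\<lambda>x. w x $ i) has_real_derivative w' x $ i) (at x within {0..h})" if "x \<in> {0..h}" for x
      using bounded_linear.has_vector_derivative[OF bounded_linear_vec_nth w[OF that]]
      by (simp add: has_real_derivative_iff_has_vector_derivative)
    show "continuous_on {0..h} (\<lambda>x. w' x $ i)"
      by (intro continuous_intros w')
  qed
  have "ip h g w = (\<Sum>i\<in>UNIV. f h $ i * w h $ i - f 0 $ i * w 0 $ i - integral {0..h} (\<lambda>x. f x $ i * w' x $ i))"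
    unfolding ip_def inner_vec_def inner_real_def
    by (rule integral_unique, rule has_integral_sum) (use component in auto)
  also have "\<dots> = f h \<bullet> w h - f 0 \<bullet> w 0 - (\<Sum>i\<in>UNIV. integral {0..h} (\<lambda>x. f x $ i * w' x $ i))"
    by (simp add: inner_vec_def sum_subtractf)
  also have "(\<Sum>i\<in>UNIV. integral {0..h} (\<lambda>x. f x $ i * w' x $ i)) = ip h f w'"
    unfolding ip_def inner_vec_def inner_real_def
    by (rule integral_sum[symmetric])
       (auto intro!: integrable_continuous_interval continuous_intros w' wderiv_continuous_on[OF fg])
  finally show ?thesis .
qed

section \<open>Polynomial test functions\<close>

lemma polyvecE:
  assumes "polyvec k f"
  obtains q where "\<And>i. degree (q i) \<le> k" "f = (\<lambda>x. \<chi> i. poly (q i) x)"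
proof -
  from assms obtain q where "\<forall>i. degree (q i) \<le> k \<and> (\<forall>x. f x $ i = poly (q i) x)"
    unfolding polyvec_def by metis
  then show ?thesis
    by (intro that[of q]) (auto simp: vec_eq_iff)
qed

lemma has_vector_derivative_vec_lambda:
  fixes f f' :: "'n::finite \<Rightarrow> real \<Rightarrow> real"
  assumes "\<And>i. (f i has_real_derivative f' i x) (at x within S)"
  shows "((\<lambda>x. \<chi> i. f i x) has_vector_derivative (\<chi> i. f' i x)) (at x within S)"
  unfolding has_vector_derivative_def
proof (subst has_derivative_componentwise_within, intro ballI)
  fix b :: "real^'n" assume "b \<in> Basis"
  then obtain i where b: "b = axis i 1" by (auto simp: Basis_vec_def)
  have "(\<lambda>t. t * f' i x) = (*) (f' i x)" by (auto simp: mult.commute)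
  then have "(f i has_derivative (\<lambda>t. t * f' i x)) (at x within S)"
    using assms[of i] by (simp add: has_field_derivative_def)
  then show "((\<lambda>x. (\<chi> i. f i x) \<bullet> b) has_derivative (\<lambda>t. t *\<^sub>R (\<chi> i. f' i x) \<bullet> b)) (at x within S)"
    by (simp add: b inner_axis)
qed

lemma has_vector_derivative_poly_vec:
  "((\<lambda>x. \<chi> i. poly (q i) x) has_vector_derivative (\<chi> i. poly (pderiv (q i)) x)) (at x within S)"
  by (rule has_vector_derivative_vec_lambda) (rule has_field_derivative_at_within[OF poly_DERIV])

lemma dx_poly_vec: "dx (\<lambda>x. \<chi> i. poly (q i) x) = (\<lambda>x. \<chi> i. poly (pderiv (q i)) x)"
  unfolding dx_def by (intro ext vector_derivative_at has_vector_derivative_poly_vec)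

lemma polyvec_has_vector_derivative:
  assumes "polyvec k f"
  shows "(f has_vector_derivative dx f x) (at x within S)"
  using assms by (elim polyvecE) (simp add: dx_poly_vec has_vector_derivative_poly_vec)

lemma polyvec_m1_dx:
  assumes "polyvec k f"
  shows "polyvec_m1 k (dx f)"
proof -
  obtain q where deg: "\<And>i. degree (q i) \<le> k" and f: "f = (\<lambda>x. \<chi> i. poly (q i) x)"
    using polyvecE[OF assms] by blast
  have "degree (pderiv (q i)) \<le> k - 1" for i
    using deg[of i] by (simp add: degree_pderiv)
  moreover have "pderiv (q i) = 0" if "k = 0" for i
    using deg[of i] that by (simp add: pderiv_eq_0_iff)
  ultimately show ?thesis
    unfolding polyvec_m1_def polyvec_def f dx_poly_vec by (auto simp: vec_eq_iff)
qed

lemma polyvec_continuous_on: "polyvec k f \<Longrightarrow> continuous_on S f"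
  by (elim polyvecE) (auto intro!: continuous_on_vec_lambda continuous_intros)

lemma polyvec_m1_continuous_on: "polyvec_m1 k f \<Longrightarrow> continuous_on S f"
  unfolding polyvec_m1_def by (auto split: if_splits intro: polyvec_continuous_on)

lemma polyvec_dx_continuous_on: "polyvec k f \<Longrightarrow> continuous_on S (dx f)"
  by (rule polyvec_m1_continuous_on[OF polyvec_m1_dx])

lemma polyvec_wderiv:
  assumes "polyvec k f" "0 \<le> h"
  shows "wderiv h f (dx f)"
  unfolding wderiv_def
proof
  show "L2 h (dx f)"
    by (intro continuous_on_imp_L2 polyvec_dx_continuous_on[OF assms(1)])
  show "\<forall>x\<in>{0..h}. f x = f 0 + integral {0..x} (dx f)"
  proof
    fix x assume "x \<in> {0..h}"
    then have "(dx f has_integral f x - f 0) {0..x}"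
      by (intro fundamental_theorem_of_calculus polyvec_has_vector_derivative[OF assms(1)]) auto
    then show "f x = f 0 + integral {0..x} (dx f)"
      by (simp add: integral_unique)
  qed
qed

lemma wderiv_integration_by_parts_polyvec:
  assumes "0 \<le> h" "wderiv h f g" "polyvec k w"
  shows "ip h g w = f h \<bullet> w h - f 0 \<bullet> w 0 - ip h f (dx w)"
  using assms by (intro wderiv_integration_by_parts polyvec_has_vector_derivative polyvec_dx_continuous_on)

lemma dx_diff_polyvec:
  assumes "polyvec k f" "polyvec k g"
  shows "dx (\<lambda>x. f x - g x) = (\<lambda>x. dx f x - dx g x)"
  unfolding dx_def
  by (intro ext vector_derivative_at has_vector_derivative_diff
      polyvec_has_vector_derivative[OF assms(1), unfolded dx_def]
      polyvec_has_vector_derivative[OF assms(2), unfolded dx_def])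

section \<open>Coercive matrix fields\<close>

lemma coercive_matrix_invertible:
  fixes A :: "real^'n^'n"
  assumes "0 < \<alpha>" and coercive: "\<And>\<xi>. \<alpha> * norm \<xi> ^ 2 \<le> (A *v \<xi>) \<bullet> \<xi>"
  shows "invertible A"
  unfolding invertible_left_inverse matrix_left_invertible_ker
proof (intro allI impI)
  fix \<xi> :: "real^'n" assume "A *v \<xi> = 0"
  then have "\<alpha> * norm \<xi> ^ 2 \<le> 0" using coercive[of \<xi>] by simp
  with \<open>0 < \<alpha>\<close> show "\<xi> = 0" by (simp add: mult_le_0_iff)
qed

lemma invertible_matrix_vector_mul_matrix_inv:
  assumes "invertible (A :: real^'n^'n)"
  shows "A *v (matrix_inv A *v v) = v"
proof -
  have "A ** matrix_inv A = mat 1"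
    using assms unfolding invertible_def matrix_inv_def by (rule someI_ex[THEN conjunct1])
  then show ?thesis
    by (metis matrix_vector_mul_assoc matrix_vector_mul_lid)
qed

lemma coercive_matrix_inv_norm_le:
  fixes A :: "real^'n^'n"
  assumes "0 < \<alpha>" and coercive: "\<And>\<xi>. \<alpha> * norm \<xi> ^ 2 \<le> (A *v \<xi>) \<bullet> \<xi>"
  shows "norm (matrix_inv A *v v) \<le> norm v / \<alpha>"
proof -
  define z where "z = matrix_inv A *v v"
  have "A *v z = v"
    using invertible_matrix_vector_mul_matrix_inv[OF coercive_matrix_invertible[OF assms]]
    by (simp add: z_def)
  then have "\<alpha> * norm z ^ 2 \<le> norm v * norm z"
    using coercive[of z] norm_cauchy_schwarz[of v z] by simp
  then have "\<alpha> * norm z \<le> norm v"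
    by (cases "z = 0") (auto simp: power2_eq_square)
  with \<open>0 < \<alpha>\<close> show ?thesis
    by (simp add: z_def field_simps)
qed

lemma continuous_on_det_replace_column:
  "continuous_on UNIV (\<lambda>(A :: real^'n^'n, v :: real^'n). det (\<chi> i j. if j = k then v $ i else A $ i $ j))"
proof -
  have "continuous_on UNIV (\<lambda>Av :: (real^'n^'n) \<times> (real^'n). if j = k then snd Av $ i else fst Av $ i $ j)"
    for i j by (cases "j = k") (auto intro!: continuous_intros)
  then show ?thesis
    unfolding det_def case_prod_beta by (intro continuous_intros)
qed

lemma continuous_on_det: "continuous_on S (det :: real^'n^'n \<Rightarrow> real)"
  unfolding det_def by (intro continuous_intros)

lemma borel_measurable_matrix_inv_mult:
  fixes C :: "'a \<Rightarrow> real^'n^'n" and y :: "'a \<Rightarrow> real^'n"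
  assumes C: "C \<in> borel_measurable M" and y: "y \<in> borel_measurable M"
    and inv: "\<And>x. x \<in> space M \<Longrightarrow> invertible (C x)"
  shows "(\<lambda>x. matrix_inv (C x) *v y x) \<in> borel_measurable M"
proof (subst borel_measurable_euclidean_space, intro ballI)
  fix b :: "real^'n" assume "b \<in> Basis"
  then obtain k where b: "b = axis k 1" by (auto simp: Basis_vec_def)
  define D where "D A v = (det (\<chi> i j. if j = k then v $ i else A $ i $ j) :: real)" for A v
  have D_meas: "(\<lambda>x. D (C x) (y x)) \<in> borel_measurable M"
    by (rule borel_measurable_continuous_Pair[OF C y])
       (use continuous_on_det_replace_column[of k] in \<open>simp add: D_def case_prod_beta\<close>)
  have det_meas: "(\<lambda>x. det (C x)) \<in> borel_measurable M"
    by (rule borel_measurable_continuous_on[OF continuous_on_det C])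
  have "(\<lambda>x. D (C x) (y x) / det (C x)) \<in> borel_measurable M"
    using D_meas det_meas by measurable
  moreover have "(matrix_inv (C x) *v y x) \<bullet> b = D (C x) (y x) / det (C x)" if "x \<in> space M" for x
    using invertible_matrix_vector_mul_matrix_inv[OF inv[OF that]]
      cramer[OF invertible_det_nz[THEN iffD1, OF inv[OF that]]]
    by (simp add: b D_def inner_axis)
  ultimately show "(\<lambda>x. (matrix_inv (C x) *v y x) \<bullet> b) \<in> borel_measurable M"
    by (simp cong: measurable_cong)
qed

lemma integrable_matrix_inv_inner:
  fixes C :: "real \<Rightarrow> real^'n^'n" and y P :: "real \<Rightarrow> real^'n"
  assumes C: "C measurable_on {a..b}" and "0 < \<alpha>"
    and coercive: "\<And>x \<xi>. x \<in> {a..b} \<Longrightarrow> \<alpha> * norm \<xi> ^ 2 \<le> (C x *v \<xi>) \<bullet> \<xi>"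
    and y: "continuous_on {a..b} y" and P: "continuous_on {a..b} P"
  shows "(\<lambda>x. (matrix_inv (C x) *v y x) \<bullet> P x) integrable_on {a..b}"
proof -
  have S: "{a..b} \<in> sets lebesgue"
    by (simp add: fmeasurableD)
  have "(\<lambda>x. matrix_inv (C x) *v y x) \<in> borel_measurable (lebesgue_on {a..b})"
  proof (rule borel_measurable_matrix_inv_mult)
    show "C \<in> borel_measurable (lebesgue_on {a..b})"
      using C S by (simp add: measurable_on_iff_borel_measurable)
    show "y \<in> borel_measurable (lebesgue_on {a..b})"
      by (rule continuous_imp_measurable_on_sets_lebesgue[OF y S])
  qed (use coercive_matrix_invertible[OF \<open>0 < \<alpha>\<close> coercive] in auto)
  moreover have "P \<in> borel_measurable (lebesgue_on {a..b})"
    by (rule continuous_imp_measurable_on_sets_lebesgue[OF P S])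
  ultimately have meas: "(\<lambda>x. (matrix_inv (C x) *v y x) \<bullet> P x) \<in> borel_measurable (lebesgue_on {a..b})"
    by measurable
  have "(\<lambda>x. (matrix_inv (C x) *v y x) \<bullet> P x) absolutely_integrable_on {a..b}"
  proof (rule measurable_bounded_by_integrable_imp_absolutely_integrable[OF meas S])
    show "(\<lambda>x. norm (y x) / \<alpha> * norm (P x)) integrable_on {a..b}"
      by (intro integrable_continuous_interval continuous_intros y P) (use \<open>0 < \<alpha>\<close> in auto)
    show "norm ((matrix_inv (C x) *v y x) \<bullet> P x) \<le> norm (y x) / \<alpha> * norm (P x)" if "x \<in> {a..b}" for x
    proof -
      have "norm ((matrix_inv (C x) *v y x) \<bullet> P x) \<le> norm (matrix_inv (C x) *v y x) * norm (P x)"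
        by (simp add: Cauchy_Schwarz_ineq2)
      also have "\<dots> \<le> norm (y x) / \<alpha> * norm (P x)"
        by (intro mult_right_mono coercive_matrix_inv_norm_le[OF \<open>0 < \<alpha>\<close> coercive[OF that]]) simp
      finally show ?thesis .
    qed
  qed
  then show ?thesis
    using set_lebesgue_integral_eq_integral(1) by blast
qed

section \<open>Error equations on an edge\<close>

lemma ip_diff_left:
  assumes "(\<lambda>x. a x \<bullet> c x) integrable_on {0..h}" "(\<lambda>x. b x \<bullet> c x) integrable_on {0..h}"
  shows "ip h (\<lambda>x. a x - b x) c = ip h a c - ip h b c"
  using assms unfolding ip_def by (simp add: inner_diff_left integral_diff)

lemma ip_diff_left_continuous:
  assumes "continuous_on {0..h} a" "continuous_on {0..h} b" "continuous_on {0..h} c"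
  shows "ip h (\<lambda>x. a x - b x) c = ip h a c - ip h b c"
  by (intro ip_diff_left integrable_continuous_interval continuous_intros assms)

lemma is_proj_polyvec:
  "is_proj p \<tau> h a b P1 P2 \<Longrightarrow> polyvec p P1 \<and> polyvec p P2"
  by (simp add: is_proj_def)

lemma is_proj_ip_dx:
  assumes "is_proj p \<tau> h a b P1 P2" "polyvec p w"
  shows "ip h P1 (dx w) = ip h a (dx w)" "ip h P2 (dx w) = ip h b (dx w)"
  using assms polyvec_m1_dx[OF assms(2)] by (simp_all add: is_proj_def)

text \<open>One edge, parametrised by [0, h]: uhN0, uhN1 and rhN0, rhN1 are the HDG node values at the
  tail x = 0 and the head x = h; the exact node values are u 0, u h and r 0, r h.\<close>

locale hdg_edge =
  fixes p :: nat and h \<tau> \<alpha> :: real and i :: vec3 and Cn Cm :: "real \<Rightarrow> mat3"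
    and u r n m n' m' f g :: "real \<Rightarrow> vec3"
    and uh rh nh mh :: "real \<Rightarrow> vec3" and uhN0 uhN1 rhN0 rhN1 :: vec3
    and Pu Pn Pr Pm :: "real \<Rightarrow> vec3"
  assumes len_nonneg: "0 \<le> h" and coercivity_pos: "0 < \<alpha>"
    and Cn_meas: "Cn measurable_on {0..h}" and Cm_meas: "Cm measurable_on {0..h}"
    and Cn_coercive: "\<And>x \<xi>. x \<in> {0..h} \<Longrightarrow> \<alpha> * norm \<xi> ^ 2 \<le> (Cn x *v \<xi>) \<bullet> \<xi>"
    and Cm_coercive: "\<And>x \<xi>. x \<in> {0..h} \<Longrightarrow> \<alpha> * norm \<xi> ^ 2 \<le> (Cm x *v \<xi>) \<bullet> \<xi>"
    and r_cont: "continuous_on {0..h} r"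
    and n_deriv: "wderiv h n n'" and m_deriv: "wderiv h m m'"
    and exact_u: "\<And>P. polyvec p P \<Longrightarrow>
      - ip h (\<lambda>x. matrix_inv (Cn x) *v n x) P + ip h u (dx P) - ip h (\<lambda>x. cross3 i (r x)) P
      = u h \<bullet> P h - u 0 \<bullet> P 0"
    and exact_r: "\<And>Q. polyvec p Q \<Longrightarrow>
      - ip h (\<lambda>x. matrix_inv (Cm x) *v m x) Q + ip h r (dx Q) = r h \<bullet> Q h - r 0 \<bullet> Q 0"
    and exact_n: "\<And>v. polyvec p v \<Longrightarrow> ip h n' v = ip h f v"
    and exact_m: "\<And>w. polyvec p w \<Longrightarrow> ip h (\<lambda>x. cross3 i (n x)) w + ip h m' w = ip h g w"
    and hdg_poly: "polyvec p uh" "polyvec p rh" "polyvec p nh" "polyvec p mh"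
    and hdg_u: "\<And>P. polyvec p P \<Longrightarrow>
      - ip h (\<lambda>x. matrix_inv (Cn x) *v nh x) P + ip h uh (dx P) - ip h (\<lambda>x. cross3 i (rh x)) P
      = uhN1 \<bullet> P h - uhN0 \<bullet> P 0"
    and hdg_r: "\<And>Q. polyvec p Q \<Longrightarrow>
      - ip h (\<lambda>x. matrix_inv (Cm x) *v mh x) Q + ip h rh (dx Q) = rhN1 \<bullet> Q h - rhN0 \<bullet> Q 0"
    and hdg_n: "\<And>v. polyvec p v \<Longrightarrow>
      ip h (dx nh) v + \<tau> * (uh 0 \<bullet> v 0 + uh h \<bullet> v h) = ip h f v + \<tau> * (uhN0 \<bullet> v 0 + uhN1 \<bullet> v h)"
    and hdg_m: "\<And>w. polyvec p w \<Longrightarrow>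
      ip h (\<lambda>x. cross3 i (nh x)) w + ip h (dx mh) w + \<tau> * (rh 0 \<bullet> w 0 + rh h \<bullet> w h)
      = ip h g w + \<tau> * (rhN0 \<bullet> w 0 + rhN1 \<bullet> w h)"
    and proj_un: "is_proj p \<tau> h u n Pu Pn" and proj_rm: "is_proj p \<tau> h r m Pr Pm"
begin

lemma n_cont: "continuous_on {0..h} n"
  by (rule wderiv_continuous_on[OF n_deriv])

lemma proj_poly: "polyvec p Pu" "polyvec p Pn" "polyvec p Pr" "polyvec p Pm"
  using is_proj_polyvec[OF proj_un] is_proj_polyvec[OF proj_rm] by simp_all

lemma ip_matrix_inv_diff:
  assumes C_meas: "C measurable_on {0..h}"
    and C_coercive: "\<And>x \<xi>. x \<in> {0..h} \<Longrightarrow> \<alpha> * norm \<xi> ^ 2 \<le> (C x *v \<xi>) \<bullet> \<xi>"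
    and "continuous_on {0..h} a" "continuous_on {0..h} b" "continuous_on {0..h} P"
  shows "ip h (\<lambda>x. matrix_inv (C x) *v (a x - b x)) P
    = ip h (\<lambda>x. matrix_inv (C x) *v a x) P - ip h (\<lambda>x. matrix_inv (C x) *v b x) P"
  unfolding matrix_vector_mult_diff_distrib
  by (intro ip_diff_left integrable_matrix_inv_inner[OF C_meas coercivity_pos C_coercive] assms)

lemma error_equation_u:
  assumes P: "polyvec p P"
  shows "ip h (\<lambda>x. Pu x - uh x) (dx P)
    = ip h (\<lambda>x. matrix_inv (Cn x) *v (n x - nh x)) P + ip h (\<lambda>x. cross3 i (r x - rh x)) P
      + (u h - uhN1) \<bullet> P h - (u 0 - uhN0) \<bullet> P 0"
proof -
  have "ip h (\<lambda>x. Pu x - uh x) (dx P) = ip h Pu (dx P) - ip h uh (dx P)"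
    by (intro ip_diff_left_continuous polyvec_continuous_on[of p] polyvec_dx_continuous_on[of p]
        proj_poly hdg_poly P)
  moreover note is_proj_ip_dx(1)[OF proj_un P]
  moreover have "ip h (\<lambda>x. matrix_inv (Cn x) *v (n x - nh x)) P
      = ip h (\<lambda>x. matrix_inv (Cn x) *v n x) P - ip h (\<lambda>x. matrix_inv (Cn x) *v nh x) P"
    by (intro ip_matrix_inv_diff Cn_meas Cn_coercive n_cont polyvec_continuous_on[of p] hdg_poly P)
  moreover have "ip h (\<lambda>x. cross3 i (r x - rh x)) P
      = ip h (\<lambda>x. cross3 i (r x)) P - ip h (\<lambda>x. cross3 i (rh x)) P"
    unfolding Cross3.right_diff_distrib
    by (intro ip_diff_left_continuous continuous_on_cross continuous_intros r_cont
        polyvec_continuous_on[of p] hdg_poly P)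
  ultimately show ?thesis
    using exact_u[OF P] hdg_u[OF P] by (simp add: inner_diff_left)
qed

lemma error_equation_r:
  assumes Q: "polyvec p Q"
  shows "ip h (\<lambda>x. Pr x - rh x) (dx Q)
    = ip h (\<lambda>x. matrix_inv (Cm x) *v (m x - mh x)) Q + (r h - rhN1) \<bullet> Q h - (r 0 - rhN0) \<bullet> Q 0"
proof -
  have "ip h (\<lambda>x. Pr x - rh x) (dx Q) = ip h Pr (dx Q) - ip h rh (dx Q)"
    by (intro ip_diff_left_continuous polyvec_continuous_on[of p] polyvec_dx_continuous_on[of p]
        proj_poly hdg_poly Q)
  moreover note is_proj_ip_dx(1)[OF proj_rm Q]
  moreover have "ip h (\<lambda>x. matrix_inv (Cm x) *v (m x - mh x)) Q
      = ip h (\<lambda>x. matrix_inv (Cm x) *v m x) Q - ip h (\<lambda>x. matrix_inv (Cm x) *v mh x) Q"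
    by (intro ip_matrix_inv_diff Cm_meas Cm_coercive wderiv_continuous_on[OF m_deriv]
        polyvec_continuous_on[of p] hdg_poly Q)
  ultimately show ?thesis
    using exact_r[OF Q] hdg_r[OF Q] by (simp add: inner_diff_left)
qed

lemma error_equation_n:
  assumes v: "polyvec p v"
  shows "ip h (dx (\<lambda>x. Pn x - nh x)) v
    = (\<tau> *\<^sub>R (uh h - uhN1) - (n h - Pn h)) \<bullet> v h + (\<tau> *\<^sub>R (uh 0 - uhN0) + (n 0 - Pn 0)) \<bullet> v 0"
proof -
  have "ip h (dx (\<lambda>x. Pn x - nh x)) v = ip h (dx Pn) v - ip h (dx nh) v"
    unfolding dx_diff_polyvec[OF proj_poly(2) hdg_poly(3)]
    by (intro ip_diff_left_continuous polyvec_dx_continuous_on[of p] polyvec_continuous_on[of p] proj_poly hdg_poly v)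
  moreover have "ip h (dx Pn) v = Pn h \<bullet> v h - Pn 0 \<bullet> v 0 - ip h n (dx v)"
    using wderiv_integration_by_parts_polyvec[OF len_nonneg polyvec_wderiv[OF proj_poly(2) len_nonneg] v]
      is_proj_ip_dx(2)[OF proj_un v] by simp
  moreover have "ip h f v = n h \<bullet> v h - n 0 \<bullet> v 0 - ip h n (dx v)"
    using wderiv_integration_by_parts_polyvec[OF len_nonneg n_deriv v] exact_n[OF v] by simp
  ultimately show ?thesis
    using hdg_n[OF v] by (simp add: inner_diff_left inner_add_left algebra_simps)
qed

lemma error_equation_m:
  assumes w: "polyvec p w"
  shows "ip h (dx (\<lambda>x. Pm x - mh x)) w
    = (\<tau> *\<^sub>R (rh h - rhN1) - (m h - Pm h)) \<bullet> w h + (\<tau> *\<^sub>R (rh 0 - rhN0) + (m 0 - Pm 0)) \<bullet> w 0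
      - ip h (\<lambda>x. cross3 i (n x - nh x)) w"
proof -
  have "ip h (dx (\<lambda>x. Pm x - mh x)) w = ip h (dx Pm) w - ip h (dx mh) w"
    unfolding dx_diff_polyvec[OF proj_poly(4) hdg_poly(4)]
    by (intro ip_diff_left_continuous polyvec_dx_continuous_on[of p] polyvec_continuous_on[of p] proj_poly hdg_poly w)
  moreover have "ip h (dx Pm) w = Pm h \<bullet> w h - Pm 0 \<bullet> w 0 - ip h m (dx w)"
    using wderiv_integration_by_parts_polyvec[OF len_nonneg polyvec_wderiv[OF proj_poly(4) len_nonneg] w]
      is_proj_ip_dx(2)[OF proj_rm w] by simp
  moreover have "ip h g w - ip h (\<lambda>x. cross3 i (n x)) w = m h \<bullet> w h - m 0 \<bullet> w 0 - ip h m (dx w)"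
    using wderiv_integration_by_parts_polyvec[OF len_nonneg m_deriv w] exact_m[OF w] by simp
  moreover have "ip h (\<lambda>x. cross3 i (n x - nh x)) w
      = ip h (\<lambda>x. cross3 i (n x)) w - ip h (\<lambda>x. cross3 i (nh x)) w"
    unfolding Cross3.right_diff_distrib
    by (intro ip_diff_left_continuous continuous_on_cross continuous_intros n_cont
        polyvec_continuous_on[of p] hdg_poly w)
  ultimately show ?thesis
    using hdg_m[OF w] by (simp add: inner_diff_left inner_add_left algebra_simps)
qed

end

section \<open>Error equations at the nodes\<close>

lemma jump_diff:
  assumes "\<And>e. e \<in> E \<Longrightarrow> q e 0 (-1) = q1 e 0 (-1) - q2 e 0 (-1)"
    and "\<And>e. e \<in> E \<Longrightarrow> q e (h e) 1 = q1 e (h e) 1 - q2 e (h e) 1"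
  shows "jump E src trg h q a = jump E src trg h q1 a - jump E src trg h q2 a"
  using assms unfolding jump_def by (simp add: sum_subtractf)

lemma jump_projection_error:
  assumes "\<And>e. e \<in> E \<Longrightarrow> is_proj p (\<tau> e) (h e) (a e) (b e) (P1 e) (P2 e)"
  shows "jump E src trg h (\<lambda>e x \<nu>. \<nu> *\<^sub>R (P2 e x - bh e x) + \<tau> e *\<^sub>R (P1 e x - ah e x) - \<tau> e *\<^sub>R (a e x - c)) n
    = jump E src trg h (\<lambda>e x \<nu>. \<nu> *\<^sub>R b e x) n
      - jump E src trg h (\<lambda>e x \<nu>. \<nu> *\<^sub>R bh e x + \<tau> e *\<^sub>R (ah e x - c)) n"
proof (rule jump_diff)
  fix e assume "e \<in> E"
  then have "- P2 e 0 + \<tau> e *\<^sub>R P1 e 0 = - b e 0 + \<tau> e *\<^sub>R a e 0"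
    and "P2 e (h e) + \<tau> e *\<^sub>R P1 e (h e) = b e (h e) + \<tau> e *\<^sub>R a e (h e)"
    using assms unfolding is_proj_def by blast+
  then show "(-1) *\<^sub>R (P2 e 0 - bh e 0) + \<tau> e *\<^sub>R (P1 e 0 - ah e 0) - \<tau> e *\<^sub>R (a e 0 - c)
      = (-1) *\<^sub>R b e 0 - ((-1) *\<^sub>R bh e 0 + \<tau> e *\<^sub>R (ah e 0 - c))"
    and "1 *\<^sub>R (P2 e (h e) - bh e (h e)) + \<tau> e *\<^sub>R (P1 e (h e) - ah e (h e)) - \<tau> e *\<^sub>R (a e (h e) - c)
      = 1 *\<^sub>R b e (h e) - (1 *\<^sub>R bh e (h e) + \<tau> e *\<^sub>R (ah e (h e) - c))"
    by (simp_all add: algebra_simps)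
qed

theorem lemma4p2:
  fixes N :: "'v set" and E :: "'e set" and ND :: "'v set"
    and pos :: "'v \<Rightarrow> vec3" and src trg :: "'e \<Rightarrow> 'v" and idx :: "'v \<Rightarrow> nat"
    and Cn Cm :: "'e \<Rightarrow> real \<Rightarrow> mat3" and \<alpha> \<beta> :: real
    and fE gE :: "'e \<Rightarrow> real \<Rightarrow> vec3" and fN gN uD rD :: "'v \<Rightarrow> vec3"
    and u r nn m nd md :: "'e \<Rightarrow> real \<Rightarrow> vec3" and uN rN :: "'v \<Rightarrow> vec3"
    and p :: nat and tau :: "'e \<Rightarrow> real"
    and uh rh nh mh :: "'e \<Rightarrow> real \<Rightarrow> vec3" and uhN rhN :: "'v \<Rightarrow> vec3"
    and Pu Pn Pr Pm :: "'e \<Rightarrow> real \<Rightarrow> vec3"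
  assumes
    \<comment> \<open>the network: finite connected graph embedded in R^3, edges oriented k < l\<close>
    finN: "finite N" and finE: "finite E"
    and ends: "\<And>e. e \<in> E \<Longrightarrow> src e \<in> N \<and> trg e \<in> N \<and> src e \<noteq> trg e"
    and simple: "inj_on (\<lambda>e. (src e, trg e)) E"
    and embed: "inj_on pos N"
    and idx_inj: "inj_on idx N" and orient: "\<And>e. e \<in> E \<Longrightarrow> idx (src e) < idx (trg e)"
    and conn: "\<And>a b. a \<in> N \<Longrightarrow> b \<in> N \<Longrightarrow>
        (a, b) \<in> ({(src e, trg e) | e. e \<in> E} \<union> {(trg e, src e) | e. e \<in> E})\<^sup>*"
    and ND: "ND \<subseteq> N" "ND \<noteq> {}"
    \<comment> \<open>material tensors\<close>
    and ab: "0 < \<alpha>" "0 < \<beta>"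
    and Cn_meas: "\<And>e. e \<in> E \<Longrightarrow> Cn e measurable_on {0..edge_len pos src trg e}"
    and Cm_meas: "\<And>e. e \<in> E \<Longrightarrow> Cm e measurable_on {0..edge_len pos src trg e}"
    and Cn_sym: "\<And>e x. e \<in> E \<Longrightarrow> x \<in> {0..edge_len pos src trg e} \<Longrightarrow> transpose (Cn e x) = Cn e x"
    and Cm_sym: "\<And>e x. e \<in> E \<Longrightarrow> x \<in> {0..edge_len pos src trg e} \<Longrightarrow> transpose (Cm e x) = Cm e x"
    and Cn_bd: "\<And>e x \<xi>. e \<in> E \<Longrightarrow> x \<in> {0..edge_len pos src trg e} \<Longrightarrow>
        \<alpha> * norm \<xi> ^ 2 \<le> (Cn e x *v \<xi>) \<bullet> \<xi> \<and> (Cn e x *v \<xi>) \<bullet> \<xi> \<le> \<beta> * norm \<xi> ^ 2"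
    and Cm_bd: "\<And>e x \<xi>. e \<in> E \<Longrightarrow> x \<in> {0..edge_len pos src trg e} \<Longrightarrow>
        \<alpha> * norm \<xi> ^ 2 \<le> (Cm e x *v \<xi>) \<bullet> \<xi> \<and> (Cm e x *v \<xi>) \<bullet> \<xi> \<le> \<beta> * norm \<xi> ^ 2"
    \<comment> \<open>data\<close>
    and fE_L2: "\<And>e. e \<in> E \<Longrightarrow> L2 (edge_len pos src trg e) (fE e)"
    and gE_L2: "\<And>e. e \<in> E \<Longrightarrow> L2 (edge_len pos src trg e) (gE e)"
    \<comment> \<open>exact solution\<close>
    and u_L2: "\<And>e. e \<in> E \<Longrightarrow> L2 (edge_len pos src trg e) (u e)"
    and r_L2: "\<And>e. e \<in> E \<Longrightarrow> L2 (edge_len pos src trg e) (r e)"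
    and n_H1: "\<And>e. e \<in> E \<Longrightarrow> wderiv (edge_len pos src trg e) (nn e) (nd e)"
    and m_H1: "\<And>e. e \<in> E \<Longrightarrow> wderiv (edge_len pos src trg e) (m e) (md e)"
    and ex_D: "\<And>a. a \<in> ND \<Longrightarrow> uN a = uD a \<and> rN a = rD a"
    and ex_n_jump: "\<And>a. a \<in> N - ND \<Longrightarrow>
        jump E src trg (edge_len pos src trg) (\<lambda>e x \<nu>. \<nu> *\<^sub>R nn e x) a = fN a"
    and ex_m_jump: "\<And>a. a \<in> N - ND \<Longrightarrow>
        jump E src trg (edge_len pos src trg) (\<lambda>e x \<nu>. \<nu> *\<^sub>R m e x) a = gN a"
    and ex_eq1: "\<And>e P Pd. e \<in> E \<Longrightarrow> wderiv (edge_len pos src trg e) P Pd \<Longrightarrow>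
        - ip (edge_len pos src trg e) (\<lambda>x. matrix_inv (Cn e x) *v nn e x) P
        + ip (edge_len pos src trg e) (u e) Pd
        - ip (edge_len pos src trg e) (\<lambda>x. cross3 (edge_dir pos src trg e) (r e x)) P
        = bdry src trg (edge_len pos src trg e) (\<lambda>a x \<nu>. uN a \<bullet> (\<nu> *\<^sub>R P x)) e"
    and ex_eq2: "\<And>e Q Qd. e \<in> E \<Longrightarrow> wderiv (edge_len pos src trg e) Q Qd \<Longrightarrow>
        - ip (edge_len pos src trg e) (\<lambda>x. matrix_inv (Cm e x) *v m e x) Q
        + ip (edge_len pos src trg e) (r e) Qd
        = bdry src trg (edge_len pos src trg e) (\<lambda>a x \<nu>. rN a \<bullet> (\<nu> *\<^sub>R Q x)) e"
    and ex_eq3: "\<And>e v. e \<in> E \<Longrightarrow> L2 (edge_len pos src trg e) v \<Longrightarrow>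
        ip (edge_len pos src trg e) (nd e) v = ip (edge_len pos src trg e) (fE e) v"
    and ex_eq4: "\<And>e w. e \<in> E \<Longrightarrow> L2 (edge_len pos src trg e) w \<Longrightarrow>
        ip (edge_len pos src trg e) (\<lambda>x. cross3 (edge_dir pos src trg e) (nn e x)) w
        + ip (edge_len pos src trg e) (md e) w = ip (edge_len pos src trg e) (gE e) w"
    \<comment> \<open>regularity of the exact solution stated in the setting\<close>
    and u_H1: "\<And>e. e \<in> E \<Longrightarrow> H1 (edge_len pos src trg e) (u e)
        \<and> u e 0 = uN (src e) \<and> u e (edge_len pos src trg e) = uN (trg e)"
    and r_H1: "\<And>e. e \<in> E \<Longrightarrow> H1 (edge_len pos src trg e) (r e)
        \<and> r e 0 = rN (src e) \<and> r e (edge_len pos src trg e) = rN (trg e)"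
    \<comment> \<open>HDG solution\<close>
    and tau_pos: "\<And>e. e \<in> E \<Longrightarrow> 0 < tau e"
    and hdg_poly: "\<And>e. e \<in> E \<Longrightarrow> polyvec p (uh e) \<and> polyvec p (rh e) \<and> polyvec p (nh e) \<and> polyvec p (mh e)"
    and hdg_D: "\<And>a. a \<in> ND \<Longrightarrow> uhN a = uD a \<and> rhN a = rD a"
    and hdg_n_jump: "\<And>a. a \<in> N - ND \<Longrightarrow>
        jump E src trg (edge_len pos src trg) (\<lambda>e x \<nu>. \<nu> *\<^sub>R nh e x + tau e *\<^sub>R (uh e x - uhN a)) a = fN a"
    and hdg_m_jump: "\<And>a. a \<in> N - ND \<Longrightarrow>
        jump E src trg (edge_len pos src trg) (\<lambda>e x \<nu>. \<nu> *\<^sub>R mh e x + tau e *\<^sub>R (rh e x - rhN a)) a = gN a"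
    and hdg_eq1: "\<And>e P. e \<in> E \<Longrightarrow> polyvec p P \<Longrightarrow>
        - ip (edge_len pos src trg e) (\<lambda>x. matrix_inv (Cn e x) *v nh e x) P
        + ip (edge_len pos src trg e) (uh e) (dx P)
        - ip (edge_len pos src trg e) (\<lambda>x. cross3 (edge_dir pos src trg e) (rh e x)) P
        = bdry src trg (edge_len pos src trg e) (\<lambda>a x \<nu>. uhN a \<bullet> (\<nu> *\<^sub>R P x)) e"
    and hdg_eq2: "\<And>e Q. e \<in> E \<Longrightarrow> polyvec p Q \<Longrightarrow>
        - ip (edge_len pos src trg e) (\<lambda>x. matrix_inv (Cm e x) *v mh e x) Q
        + ip (edge_len pos src trg e) (rh e) (dx Q)
        = bdry src trg (edge_len pos src trg e) (\<lambda>a x \<nu>. rhN a \<bullet> (\<nu> *\<^sub>R Q x)) e"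
    and hdg_eq3: "\<And>e v. e \<in> E \<Longrightarrow> polyvec p v \<Longrightarrow>
        ip (edge_len pos src trg e) (dx (nh e)) v
        + tau e * bdry src trg (edge_len pos src trg e) (\<lambda>a x \<nu>. uh e x \<bullet> v x) e
        = ip (edge_len pos src trg e) (fE e) v
        + tau e * bdry src trg (edge_len pos src trg e) (\<lambda>a x \<nu>. uhN a \<bullet> v x) e"
    and hdg_eq4: "\<And>e w. e \<in> E \<Longrightarrow> polyvec p w \<Longrightarrow>
        ip (edge_len pos src trg e) (\<lambda>x. cross3 (edge_dir pos src trg e) (nh e x)) w
        + ip (edge_len pos src trg e) (dx (mh e)) w
        + tau e * bdry src trg (edge_len pos src trg e) (\<lambda>a x \<nu>. rh e x \<bullet> w x) e
        = ip (edge_len pos src trg e) (gE e) w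
        + tau e * bdry src trg (edge_len pos src trg e) (\<lambda>a x \<nu>. rhN a \<bullet> w x) e"
    \<comment> \<open>projections Pi(u,n) = (Pu,Pn) and Pi(r,m) = (Pr,Pm)\<close>
    and proj_un: "\<And>e. e \<in> E \<Longrightarrow> is_proj p (tau e) (edge_len pos src trg e) (u e) (nn e) (Pu e) (Pn e)"
    and proj_rm: "\<And>e. e \<in> E \<Longrightarrow> is_proj p (tau e) (edge_len pos src trg e) (r e) (m e) (Pr e) (Pm e)"
  shows
    "(\<forall>e\<in>E. \<forall>P Q v w. polyvec p P \<longrightarrow> polyvec p Q \<longrightarrow> polyvec p v \<longrightarrow> polyvec p w \<longrightarrow>
      ip (edge_len pos src trg e) (\<lambda>x. Pu e x - uh e x) (dx P)
        = ip (edge_len pos src trg e) (\<lambda>x. matrix_inv (Cn e x) *v (nn e x - nh e x)) P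
        + ip (edge_len pos src trg e) (\<lambda>x. cross3 (edge_dir pos src trg e) (r e x - rh e x)) P
        + bdry src trg (edge_len pos src trg e) (\<lambda>a x \<nu>. (u e x - uhN a) \<bullet> (\<nu> *\<^sub>R P x)) e
      \<and> ip (edge_len pos src trg e) (\<lambda>x. Pr e x - rh e x) (dx Q)
        = ip (edge_len pos src trg e) (\<lambda>x. matrix_inv (Cm e x) *v (m e x - mh e x)) Q
        + bdry src trg (edge_len pos src trg e) (\<lambda>a x \<nu>. (r e x - rhN a) \<bullet> (\<nu> *\<^sub>R Q x)) e
      \<and> ip (edge_len pos src trg e) (dx (\<lambda>x. Pn e x - nh e x)) v
        = bdry src trg (edge_len pos src trg e)
            (\<lambda>a x \<nu>. (tau e *\<^sub>R (uh e x - uhN a) - \<nu> *\<^sub>R (nn e x - Pn e x)) \<bullet> v x) e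
      \<and> ip (edge_len pos src trg e) (dx (\<lambda>x. Pm e x - mh e x)) w
        = bdry src trg (edge_len pos src trg e)
            (\<lambda>a x \<nu>. (tau e *\<^sub>R (rh e x - rhN a) - \<nu> *\<^sub>R (m e x - Pm e x)) \<bullet> w x) e
          - ip (edge_len pos src trg e) (\<lambda>x. cross3 (edge_dir pos src trg e) (nn e x - nh e x)) w)
    \<and> (\<forall>a\<in>N - ND. \<forall>vN wN :: vec3.
      0 = jump E src trg (edge_len pos src trg)
            (\<lambda>e x \<nu>. \<nu> *\<^sub>R (Pn e x - nh e x) + tau e *\<^sub>R (Pu e x - uh e x)
                     - tau e *\<^sub>R (u e x - uhN a)) a \<bullet> vN
        + jump E src trg (edge_len pos src trg)
            (\<lambda>e x \<nu>. \<nu> *\<^sub>R (Pm e x - mh e x) + tau e *\<^sub>R (Pr e x - rh e x)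
                     - tau e *\<^sub>R (r e x - rhN a)) a \<bullet> wN)"
proof -
  have len: "0 \<le> edge_len pos src trg e" for e
    by (simp add: edge_len_def)
  have edge: "hdg_edge p (edge_len pos src trg e) (tau e) \<alpha> (edge_dir pos src trg e) (Cn e) (Cm e)
      (u e) (r e) (nn e) (m e) (nd e) (md e) (fE e) (gE e) (uh e) (rh e) (nh e) (mh e)
      (uhN (src e)) (uhN (trg e)) (rhN (src e)) (rhN (trg e)) (Pu e) (Pn e) (Pr e) (Pm e)"
    if e: "e \<in> E" for e
  proof
    fix P :: "real \<Rightarrow> vec3" assume P: "polyvec p P"
    show "- ip (edge_len pos src trg e) (\<lambda>x. matrix_inv (Cn e x) *v nn e x) P
        + ip (edge_len pos src trg e) (u e) (dx P)
        - ip (edge_len pos src trg e) (\<lambda>x. cross3 (edge_dir pos src trg e) (r e x)) P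
        = u e (edge_len pos src trg e) \<bullet> P (edge_len pos src trg e) - u e 0 \<bullet> P 0"
      using ex_eq1[OF e polyvec_wderiv[OF P len]] u_H1[OF e] by (simp add: bdry_def)
    show "- ip (edge_len pos src trg e) (\<lambda>x. matrix_inv (Cm e x) *v m e x) P
        + ip (edge_len pos src trg e) (r e) (dx P)
        = r e (edge_len pos src trg e) \<bullet> P (edge_len pos src trg e) - r e 0 \<bullet> P 0"
      using ex_eq2[OF e polyvec_wderiv[OF P len]] r_H1[OF e] by (simp add: bdry_def)
    show "ip (edge_len pos src trg e) (nd e) P = ip (edge_len pos src trg e) (fE e) P"
      by (intro ex_eq3 e continuous_on_imp_L2 polyvec_continuous_on[OF P])
    show "ip (edge_len pos src trg e) (\<lambda>x. cross3 (edge_dir pos src trg e) (nn e x)) P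
        + ip (edge_len pos src trg e) (md e) P = ip (edge_len pos src trg e) (gE e) P"
      by (intro ex_eq4 e continuous_on_imp_L2 polyvec_continuous_on[OF P])
  qed (use e len ab Cn_meas Cm_meas Cn_bd Cm_bd n_H1 m_H1 hdg_poly proj_un proj_rm
         H1_continuous_on r_H1 hdg_eq1 hdg_eq2 hdg_eq3 hdg_eq4 in \<open>auto simp: bdry_def\<close>)
  show ?thesis
    apply (rule conjI)
    subgoal
      using hdg_edge.error_equation_u[OF edge] hdg_edge.error_equation_r[OF edge]
        hdg_edge.error_equation_n[OF edge] hdg_edge.error_equation_m[OF edge]
      by (simp add: bdry_def algebra_simps)
    subgoal
      using ex_n_jump hdg_n_jump ex_m_jump hdg_m_jump
      by (simp add: jump_projection_error[OF proj_un] jump_projection_error[OF proj_rm])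
    done
qed

end
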